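(* Let $q$ be a prime power, $8\le n\le q$, $\alpha_1,\dots,\alpha_n\in\mathbb{F}_q$ distinct, $u_1,\dots,u_n\in\mathbb{F}_q^*$, and $H\in\mathbb{F}_q^{7\times n}$ with $H_{ab}=u_b\alpha_b^{a-1}$ (so $\ker H$ has distance $8$). Then the number of $e\in\mathbb{F}_q^n$ with $|e|=4$ for which there exists $e'\in\mathbb{F}_q^n$, $e'\ne e$, $|e'|\le 4$, $He'=He$, is at most $$\frac{(n-4)(n-5)(n-6)(n-7)}{24(q-1)^3}\cdot(q-1)^4\binom{n}{4}.$$
   Context: $|e|$ denotes the Hamming weight of $e\in\mathbb{F}_q^n$. *)

theory Defs
  imports Complex_Main "HOL-Library.Cardinality"
begin

text \<open>Vectors in F_q^n are functions from a finite index type 'n (with CARD('n) = n) to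
  the finite field 'a.\<close>

definition hamming_weight :: "('n::finite \<Rightarrow> 'a::zero) \<Rightarrow> nat" where
  "hamming_weight e = card {i. e i \<noteq> 0}"

text \<open>The parity check matrix H with rows a = 1..r (here indexed 0..r-1) and
  entries H_ab = u_b * alpha_b^(a-1); syndrome H e.\<close>

definition grs_syndrome ::
  "nat \<Rightarrow> ('n::finite \<Rightarrow> 'a::comm_ring_1) \<Rightarrow> ('n \<Rightarrow> 'a) \<Rightarrow> ('n \<Rightarrow> 'a) \<Rightarrow> nat \<Rightarrow> 'a" where
  "grs_syndrome r u \<alpha> e = (\<lambda>a. if a < r then (\<Sum>b\<in>UNIV. u b * \<alpha> b ^ a * e b) else 0)"

end

theory Submission
  imports Defs "HOL-Computational_Algebra.Polynomial" "HOL-Library.Function_Algebras"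
begin

text \<open>A nonzero codeword c (syndrome 0 for r rows) has weight > r: the sum of
  u b * c b * p (\<alpha> b) vanishes for every polynomial p of degree < r, but for the p vanishing on
  all points of the support except one it is a single nonzero term. Hence codewords supported on
  a common set of r + 1 positions are collinear.

  Now let r = 2w - 1 and let e \<noteq> e' have equal syndromes, |e| = w and |e'| \<le> w. Then e - e' is a
  nonzero codeword on the union of the two supports, which forces them to be disjoint of size w
  each, and e - e' is a nonzero multiple of one fixed codeword attached to that union. So e, the
  restriction of e - e' to its own support S, is determined by S, the support of e' and the
  scalar, which leaves at most C(n,w) C(n-w,w) (q-1) possibilities.\<close>

lemma grs_syndrome_diff:
  "grs_syndrome r u \<alpha> (c - d) = grs_syndrome r u \<alpha> c - grs_syndrome r u \<alpha> d"
  by (simp add: grs_syndrome_def fun_eq_iff right_diff_distrib sum_subtractf)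

lemma grs_syndrome_scale:
  "grs_syndrome r u \<alpha> (\<lambda>i. l * c i) = (\<lambda>a. l * grs_syndrome r u \<alpha> c a)"
  by (simp add: grs_syndrome_def fun_eq_iff sum_distrib_left mult_ac)

lemma grs_codeword_poly_sum_eq_0:
  fixes p :: "'a::comm_ring_1 poly"
  assumes "grs_syndrome r u \<alpha> c = 0" and "degree p < r"
  shows "(\<Sum>b\<in>UNIV. u b * c b * poly p (\<alpha> b)) = 0"
proof -
  have "(\<Sum>b\<in>UNIV. u b * c b * poly p (\<alpha> b))
      = (\<Sum>k\<le>degree p. coeff p k * (\<Sum>b\<in>UNIV. u b * \<alpha> b ^ k * c b))"
    by (simp add: poly_altdef sum_distrib_left sum.swap[where A = UNIV] mult_ac)
  also have "\<dots> = (\<Sum>k\<le>degree p. coeff p k * grs_syndrome r u \<alpha> c k)"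
    using assms(2) by (intro sum.cong) (auto simp: grs_syndrome_def)
  also have "\<dots> = 0"
    using assms(1) by simp
  finally show ?thesis .
qed

lemma grs_codeword_weight_gt:
  fixes \<alpha> u c :: "'n::finite \<Rightarrow> 'a::field"
  assumes "inj \<alpha>" and "\<And>b. u b \<noteq> 0"
    and "grs_syndrome r u \<alpha> c = 0" and "c \<noteq> 0"
  shows "r < hamming_weight c"
proof (rule ccontr)
  assume "\<not> r < hamming_weight c"
  define S where "S = {i. c i \<noteq> 0}"
  obtain b0 where "b0 \<in> S"
    using \<open>c \<noteq> 0\<close> by (auto simp: S_def fun_eq_iff)
  define p where "p = (\<Prod>b\<in>S - {b0}. [:- \<alpha> b, 1:])"
  have "degree p \<le> card (S - {b0})"
    unfolding p_def using degree_prod_sum_le[of "S - {b0}" "\<lambda>b. [:- \<alpha> b, 1:]"] by simp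
  also have "\<dots> < r"
    using \<open>b0 \<in> S\<close> \<open>\<not> r < hamming_weight c\<close> card_gt_0_iff[of S]
    by (auto simp: S_def hamming_weight_def)
  finally have "(\<Sum>b\<in>UNIV. u b * c b * poly p (\<alpha> b)) = 0"
    using grs_codeword_poly_sum_eq_0 \<open>grs_syndrome r u \<alpha> c = 0\<close> by blast
  moreover have "u b * c b * poly p (\<alpha> b) = 0" if "b \<noteq> b0" for b
    using that by (cases "b \<in> S") (auto simp: S_def p_def poly_prod)
  ultimately have "u b0 * c b0 * poly p (\<alpha> b0) = 0"
    by (simp add: sum.remove[of UNIV b0])
  moreover have "poly p (\<alpha> b0) \<noteq> 0"
    using \<open>inj \<alpha>\<close> by (auto simp: p_def poly_prod inj_eq)
  ultimately show False
    using \<open>b0 \<in> S\<close> assms(2) by (simp add: S_def)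
qed

lemma grs_codewords_collinear:
  fixes \<alpha> u c d :: "'n::finite \<Rightarrow> 'a::field"
  assumes "inj \<alpha>" and "\<And>b. u b \<noteq> 0"
    and "grs_syndrome r u \<alpha> c = 0" and "grs_syndrome r u \<alpha> d = 0"
    and "{i. c i \<noteq> 0} \<subseteq> W" and "{i. d i \<noteq> 0} \<subseteq> W" and "card W \<le> Suc r"
    and "c \<noteq> 0"
  shows "\<exists>l. d = (\<lambda>i. l * c i)"
proof -
  obtain b0 where "c b0 \<noteq> 0"
    using \<open>c \<noteq> 0\<close> by (auto simp: fun_eq_iff)
  define l where "l = d b0 / c b0"
  define f where "f = d - (\<lambda>i. l * c i)"
  have "grs_syndrome r u \<alpha> f = 0"
    using assms(3,4) by (simp add: f_def grs_syndrome_diff grs_syndrome_scale zero_fun_def)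
  moreover have "{i. f i \<noteq> 0} \<subseteq> W - {b0}"
    using assms(5,6) \<open>c b0 \<noteq> 0\<close>
    by (auto simp: f_def l_def subset_iff) (metis div_0 mult_zero_right)
  then have "hamming_weight f \<le> r"
    unfolding hamming_weight_def
    using card_mono[of "W - {b0}" "{i. f i \<noteq> 0}"] assms(7) \<open>c b0 \<noteq> 0\<close> assms(5)
    by (auto simp: card_Diff_singleton)
  ultimately have "f = 0"
    using grs_codeword_weight_gt assms(1,2) by (meson leD)
  then show ?thesis
    by (auto simp: f_def fun_eq_iff)
qed

lemma confusable_errors_disjoint_supports:
  fixes \<alpha> u e e' :: "'n::finite \<Rightarrow> 'a::field"
  assumes "inj \<alpha>" and "\<And>b. u b \<noteq> 0" and "2 * w = Suc r"
    and "hamming_weight e = w" and "hamming_weight e' \<le> w" and "e' \<noteq> e"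
    and "grs_syndrome r u \<alpha> e' = grs_syndrome r u \<alpha> e"
  shows "hamming_weight e' = w" and "{i. e i \<noteq> 0} \<inter> {i. e' i \<noteq> 0} = {}"
proof -
  let ?S = "{i. e i \<noteq> 0}" and ?T = "{i. e' i \<noteq> 0}"
  have "grs_syndrome r u \<alpha> (e - e') = 0"
    using assms(7) by (simp add: grs_syndrome_diff)
  moreover have "e - e' \<noteq> 0"
    using assms(6) by simp
  ultimately have "r < hamming_weight (e - e')"
    using grs_codeword_weight_gt assms(1,2) by blast
  also have "hamming_weight (e - e') \<le> card (?S \<union> ?T)"
    unfolding hamming_weight_def by (intro card_mono) auto
  finally have "2 * w \<le> card (?S \<union> ?T)"
    using assms(3) by simp
  moreover have "card ?S + card ?T = card (?S \<union> ?T) + card (?S \<inter> ?T)"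
    by (rule card_Un_Int) simp_all
  ultimately have "card ?T = w" and "card (?S \<inter> ?T) = 0"
    using assms(4,5) unfolding hamming_weight_def by linarith+
  then show "hamming_weight e' = w" and "?S \<inter> ?T = {}"
    by (simp_all add: hamming_weight_def)
qed

text \<open>An unspecified vector when W supports no nonzero codeword.\<close>

definition grs_codeword_on ::
  "nat \<Rightarrow> ('n::finite \<Rightarrow> 'a::comm_ring_1) \<Rightarrow> ('n \<Rightarrow> 'a) \<Rightarrow> 'n set \<Rightarrow> 'n \<Rightarrow> 'a" where
  "grs_codeword_on r u \<alpha> W = (SOME c. c \<noteq> 0 \<and> grs_syndrome r u \<alpha> c = 0 \<and> {i. c i \<noteq> 0} \<subseteq> W)"

lemma confusable_error_eq_scaled_codeword:
  fixes \<alpha> u e e' :: "'n::finite \<Rightarrow> 'a::field"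
  assumes "inj \<alpha>" and "\<And>b. u b \<noteq> 0" and "2 * w = Suc r"
    and "hamming_weight e = w" and "hamming_weight e' \<le> w" and "e' \<noteq> e"
    and "grs_syndrome r u \<alpha> e' = grs_syndrome r u \<alpha> e"
  obtains l where "l \<noteq> 0"
    and "e = (\<lambda>i. if e i \<noteq> 0
                 then l * grs_codeword_on r u \<alpha> ({i. e i \<noteq> 0} \<union> {i. e' i \<noteq> 0}) i else 0)"
proof -
  define W where "W = {i. e i \<noteq> 0} \<union> {i. e' i \<noteq> 0}"
  define c where "c = grs_codeword_on r u \<alpha> W"
  have disjoint: "{i. e i \<noteq> 0} \<inter> {i. e' i \<noteq> 0} = {}"
    and "card W \<le> Suc r"
    using confusable_errors_disjoint_supports[OF assms] assms(3,4)
    by (auto simp: W_def hamming_weight_def card_Un_disjoint)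
  have e_diff: "grs_syndrome r u \<alpha> (e - e') = 0" "e - e' \<noteq> 0" "{i. (e - e') i \<noteq> 0} \<subseteq> W"
    using assms(6,7) by (auto simp: grs_syndrome_diff W_def)
  then have "\<exists>c. c \<noteq> 0 \<and> grs_syndrome r u \<alpha> c = 0 \<and> {i. c i \<noteq> 0} \<subseteq> W"
    by blast
  then have "c \<noteq> 0 \<and> grs_syndrome r u \<alpha> c = 0 \<and> {i. c i \<noteq> 0} \<subseteq> W"
    unfolding c_def grs_codeword_on_def by (rule someI_ex)
  then obtain l where l: "e - e' = (\<lambda>i. l * c i)"
    using grs_codewords_collinear[of \<alpha> u r c "e - e'" W] assms(1,2) e_diff \<open>card W \<le> Suc r\<close>
    by blast
  have "l \<noteq> 0"
    using l e_diff(2) by (auto simp: zero_fun_def)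
  moreover have "e = (\<lambda>i. if e i \<noteq> 0 then l * c i else 0)"
  proof (rule ext)
    fix i
    have "e' i = 0" if "e i \<noteq> 0"
      using disjoint that by blast
    then show "e i = (if e i \<noteq> 0 then l * c i else 0)"
      using fun_cong[OF l, of i] by auto
  qed
  ultimately show ?thesis
    using that unfolding c_def W_def by blast
qed

lemma card_disjoint_subset_pairs:
  assumes "finite A"
  shows "card (SIGMA S:{S. S \<subseteq> A \<and> card S = k}. {T. T \<subseteq> A - S \<and> card T = m})
    = (card A choose k) * ((card A - k) choose m)"
proof -
  have "card (SIGMA S:{S. S \<subseteq> A \<and> card S = k}. {T. T \<subseteq> A - S \<and> card T = m})
      = (\<Sum>S | S \<subseteq> A \<and> card S = k. card {T. T \<subseteq> A - S \<and> card T = m})"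
    using assms by (intro card_SigmaI) auto
  also have "\<dots> = (\<Sum>S | S \<subseteq> A \<and> card S = k. (card A - k) choose m)"
    using assms by (intro sum.cong) (auto simp: n_subsets card_Diff_subset finite_subset)
  also have "\<dots> = (card A choose k) * ((card A - k) choose m)"
    using assms by (simp add: n_subsets)
  finally show ?thesis .
qed

lemma card_confusable_errors_le:
  fixes \<alpha> u :: "'n::finite \<Rightarrow> 'a::{field,finite}"
  assumes "inj \<alpha>" and "\<And>b. u b \<noteq> 0" and "2 * w = Suc r"
  shows "card {e :: 'n \<Rightarrow> 'a. hamming_weight e = w \<and>
            (\<exists>e'. e' \<noteq> e \<and> hamming_weight e' \<le> w \<and>
                  grs_syndrome r u \<alpha> e' = grs_syndrome r u \<alpha> e)}
    \<le> (CARD('n) choose w) * ((CARD('n) - w) choose w) * (CARD('a) - 1)"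
    (is "card ?E \<le> _")
proof -
  define D where "D = (SIGMA S:{S :: 'n set. card S = w}. {T. T \<subseteq> - S \<and> card T = w})
    \<times> (UNIV - {0 :: 'a})"
  define decode where "decode = (\<lambda>((S, T), l).
    (\<lambda>i. if i \<in> S then l * grs_codeword_on r u \<alpha> (S \<union> T) i else 0))"
  have "?E \<subseteq> decode ` D"
  proof
    fix e assume "e \<in> ?E"
    then obtain e' where e: "hamming_weight e = w" "hamming_weight e' \<le> w" "e' \<noteq> e"
      "grs_syndrome r u \<alpha> e' = grs_syndrome r u \<alpha> e"
      by blast
    obtain l where "l \<noteq> 0"
      and "e = (\<lambda>i. if e i \<noteq> 0
                   then l * grs_codeword_on r u \<alpha> ({i. e i \<noteq> 0} \<union> {i. e' i \<noteq> 0}) i else 0)"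
      using confusable_error_eq_scaled_codeword[OF assms e] by blast
    then have "e = decode (({i. e i \<noteq> 0}, {i. e' i \<noteq> 0}), l)"
      by (simp add: decode_def)
    moreover have "(({i. e i \<noteq> 0}, {i. e' i \<noteq> 0}), l) \<in> D"
      using confusable_errors_disjoint_supports[OF assms e] e(1) \<open>l \<noteq> 0\<close>
      by (auto simp: D_def hamming_weight_def)
    ultimately show "e \<in> decode ` D"
      by blast
  qed
  then have "card ?E \<le> card (decode ` D)"
    by (intro card_mono) simp_all
  also have "\<dots> \<le> card D"
    by (rule card_image_le) simp
  also have "\<dots> = (CARD('n) choose w) * ((CARD('n) - w) choose w) * (CARD('a) - 1)"
    using card_disjoint_subset_pairs[of "UNIV :: 'n set" w w]
    by (simp add: D_def card_cartesian_product card_Diff_subset Compl_eq_Diff_UNIV)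
  finally show ?thesis .
qed

lemma real_binomial_4:
  "24 * real (m choose 4) = real m * real (m - 1) * real (m - 2) * real (m - 3)"
proof (cases "4 \<le> m")
  case True
  then show ?thesis
    by (simp add: binomial_altdef_of_nat atLeast0_lessThan_Suc numeral_eq_Suc field_simps)
next
  case False
  then show ?thesis
    by (auto simp: not_le numeral_eq_Suc less_Suc_eq)
qed

theorem mainTheorem13:
  fixes \<alpha> u :: "'n::finite \<Rightarrow> 'a::{field,finite}"
  assumes "8 \<le> CARD('n)" and "CARD('n) \<le> CARD('a)"
    and "inj \<alpha>"
    and "\<And>b. u b \<noteq> 0"
  shows "real (card {e :: 'n \<Rightarrow> 'a. hamming_weight e = 4 \<and>
            (\<exists>e'. e' \<noteq> e \<and> hamming_weight e' \<le> 4 \<and>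
                  grs_syndrome 7 u \<alpha> e' = grs_syndrome 7 u \<alpha> e)})
    \<le> (real (CARD('n) - 4) * real (CARD('n) - 5) * real (CARD('n) - 6) * real (CARD('n) - 7))
        / (24 * (real CARD('a) - 1) ^ 3)
      * (real CARD('a) - 1) ^ 4 * real (CARD('n) choose 4)"
proof -
  let ?n = "CARD('n)" and ?q = "CARD('a)"
  define x where "x = real ?q - 1"
  have "x > 0"
    using assms(1,2) by (simp add: x_def)
  have "card {e :: 'n \<Rightarrow> 'a. hamming_weight e = 4 \<and>
            (\<exists>e'. e' \<noteq> e \<and> hamming_weight e' \<le> 4 \<and>
                  grs_syndrome 7 u \<alpha> e' = grs_syndrome 7 u \<alpha> e)}
      \<le> (?n choose 4) * ((?n - 4) choose 4) * (?q - 1)" (is "card ?E \<le> _")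
    using card_confusable_errors_le[of \<alpha> u 4 7] assms(3,4) by simp
  then have "real (card ?E) \<le> real ((?n choose 4) * ((?n - 4) choose 4) * (?q - 1))"
    by (rule of_nat_mono)
  also have "\<dots> = real ((?n - 4) choose 4) * x * real (?n choose 4)"
    using assms(1,2) by (simp add: x_def of_nat_diff)
  also have "\<dots> = 24 * real ((?n - 4) choose 4) / (24 * x ^ 3) * x ^ 4 * real (?n choose 4)"
    using \<open>x > 0\<close> by (simp add: power_Suc numeral_eq_Suc)
  also have "24 * real ((?n - 4) choose 4)
      = real (?n - 4) * real (?n - 5) * real (?n - 6) * real (?n - 7)"
    using real_binomial_4[of "?n - 4"] by (simp add: diff_diff_add)
  finally show ?thesis
    unfolding x_def .
qed

end
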